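(* Consider the nonlinear program described in the context and the control-affine system $\dot x=-\nabla f(x)-\frac{\partial g}{\partial x}(x)^\top u-\frac{\partial h}{\partial x}(x)^\top v$ with inputs $(u,v)\in\mathcal{U}=\mathbb{R}^m_{\ge0}\times\mathbb{R}^k$. If MFCQ holds at every $x\in\mathcal{C}$, then there exists an open set $X$ containing $\mathcal{C}$ such that $\phi=(g,h):\mathbb{R}^n\to\mathbb{R}^{m+k}$ is an $(m,k)$-vector control barrier function of $\mathcal{C}$ on $X$ relative to $\mathcal{U}$ for this system.
   Context: Let $f:\mathbb{R}^n\to\mathbb{R}$, $g:\mathbb{R}^n\to\mathbb{R}^m$, $h:\mathbb{R}^n\to\mathbb{R}^k$ be continuously differentiable; program: minimize $f(x)$ subject to $g(x)\le0$, $h(x)=0$; feasible set $\mathcal{C}=\{x:g(x)\le0,h(x)=0\}$; $I_0(x)=\{i:g_i(x)=0\}$. MFCQ at $x$: $\{\nabla h_j(x)\}_{j=1}^k$ linearly independent and some $\xi$ has $\nabla h_j(x)^\top\xi=0$ for all $j$ and $\nabla g_i(x)^\top\xi<0$ for $i\in I_0(x)$. For a set $\mathcal{C}\subset X\subset\mathbb{R}^n$, a continuously differentiable $\phi:\mathbb{R}^n\to\mathbb{R}^{m+k}$ is an $(m,k)$-vector control barrier function of $\mathcal{C}$ on $X$ relative to $\mathcal{U}$ (for a control-affine system $\dot x=F_0(x)+\sum_\ell w_\ell F_\ell(x)$) if $\mathcal{C}=\{x:\phi_i(x)\le0,\ 1\le i\le m;\ \phi_j(x)=0,\ m<j\le m+k\}$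 and there exists $\alpha>0$ such that, for all $x\in X$, the set of $w\in\mathcal{U}$ with $\nabla\phi_i(x)^\top(F_0(x)+\sum_\ell w_\ell F_\ell(x))+\alpha\phi_i(x)\le0$ for $1\le i\le m$ and $\nabla\phi_j(x)^\top(F_0(x)+\sum_\ell w_\ell F_\ell(x))+\alpha\phi_j(x)=0$ for $m<j\le m+k$ is nonempty. For the system above, with $G=\frac{\partial g}{\partial x}(x)$, $H=\frac{\partial h}{\partial x}(x)$, this set is $K_\alpha(x)=\{(u,v)\in\mathbb{R}^m_{\ge0}\times\mathbb{R}^k: -GG^\top u-GH^\top v\le G\nabla f(x)-\alpha g(x),\ -HG^\top u-HH^\top v=H\nabla f(x)-\alpha h(x)\}$. *)

theory Defs
  imports "HOL-Analysis.Analysis"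
begin

definition grad :: "(real^'n \<Rightarrow> real) \<Rightarrow> real^'n \<Rightarrow> real^'n" where
  "grad p x = (SOME D. GDERIV p x :> D)"

definition C1_fun :: "(real^'n \<Rightarrow> real) \<Rightarrow> bool" where
  "C1_fun p \<longleftrightarrow> (\<forall>x. \<exists>D. GDERIV p x :> D) \<and> continuous_on UNIV (grad p)"

definition feasible_set ::
  "nat \<Rightarrow> nat \<Rightarrow> (nat \<Rightarrow> real^'n \<Rightarrow> real) \<Rightarrow> (nat \<Rightarrow> real^'n \<Rightarrow> real) \<Rightarrow> (real^'n) set" where
  "feasible_set m k g h = {x. (\<forall>i<m. g i x \<le> 0) \<and> (\<forall>j<k. h j x = 0)}"

definition MFCQ ::
  "nat \<Rightarrow> nat \<Rightarrow> (nat \<Rightarrow> real^'n \<Rightarrow> real) \<Rightarrow> (nat \<Rightarrow> real^'n \<Rightarrow> real) \<Rightarrow> real^'n \<Rightarrow> bool" where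
  "MFCQ m k g h x \<longleftrightarrow>
     (\<forall>c::nat \<Rightarrow> real. (\<Sum>j<k. c j *\<^sub>R grad (h j) x) = 0 \<longrightarrow> (\<forall>j<k. c j = 0)) \<and>
     (\<exists>\<xi>. (\<forall>j<k. grad (h j) x \<bullet> \<xi> = 0) \<and> (\<forall>i<m. g i x = 0 \<longrightarrow> grad (g i) x \<bullet> \<xi> < 0))"

text \<open>(m,k)-vector control barrier function \<phi> (components \<phi>_0..\<phi>_(m+k-1)) of C on X relative
  to U, for the control-affine system dx/dt = F0 x + \<Sum>l<p. w l *R F l x with p inputs.\<close>
definition vector_cbf ::
  "nat \<Rightarrow> nat \<Rightarrow> (nat \<Rightarrow> real^'n \<Rightarrow> real) \<Rightarrow> (real^'n) set \<Rightarrow> (real^'n) set \<Rightarrow>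
   nat \<Rightarrow> (real^'n \<Rightarrow> real^'n) \<Rightarrow> (nat \<Rightarrow> real^'n \<Rightarrow> real^'n) \<Rightarrow> (nat \<Rightarrow> real) set \<Rightarrow> bool" where
  "vector_cbf m k \<phi> C X p F0 F U \<longleftrightarrow>
     C \<subseteq> X \<and>
     (\<forall>i<m+k. C1_fun (\<phi> i)) \<and>
     C = {x. (\<forall>i<m. \<phi> i x \<le> 0) \<and> (\<forall>j\<in>{m..<m+k}. \<phi> j x = 0)} \<and>
     (\<exists>\<alpha>>0. \<forall>x\<in>X. \<exists>w\<in>U.
        (\<forall>i<m. grad (\<phi> i) x \<bullet> (F0 x + (\<Sum>l<p. w l *\<^sub>R F l x)) + \<alpha> * \<phi> i x \<le> 0) \<and>
        (\<forall>j\<in>{m..<m+k}. grad (\<phi> j) x \<bullet> (F0 x + (\<Sum>l<p. w l *\<^sub>R F l x)) + \<alpha> * \<phi> j x = 0))"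

end

theory Submission
  imports Defs
begin

text \<open>
  With inputs w = (u, v) the closed-loop velocity is -(\<nabla>f x + \<Sum>l w l \<nabla>\<phi>_l x), so for
  \<alpha> = 1 the barrier conditions at x ask for a point \<nabla>f x + \<Sum>l w l \<nabla>\<phi>_l x, with w l \<ge> 0
  for the inequality constraints, in the linearization
  P x = {y. \<phi>_i x \<le> \<nabla>\<phi>_i x \<bullet> y (i < m), \<nabla>\<phi>_j x \<bullet> y = \<phi>_j x (m \<le> j < m + k)}.
  Such a point exists whenever P x is nonempty: by Farkas' lemma, the nearest point of P x to
  \<nabla>f x is \<nabla>f x plus an element of the cone spanned by the constraint normals.
  Near a feasible point where MFCQ holds, P x is nonempty: it contains s - t \<xi>, where \<xi> is
  the MFCQ direction, t > 0 is small, and the small correction s restores the equality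
  constraints, which is possible because the gradients of h stay linearly independent.
  So X can be taken to be the interior of {x. P x \<noteq> {}}.
\<close>

section \<open>Perturbed linear systems\<close>

lemma in_span_image_imp_sum:
  fixes a :: "nat \<Rightarrow> 'a::real_vector"
  assumes "finite I" and "y \<in> span (a ` I)"
  shows "\<exists>c. y = (\<Sum>j\<in>I. c j *\<^sub>R a j)"
  using assms(2)
proof (induction rule: span_induct_alt)
  case base
  show ?case by (auto intro!: exI[of _ "\<lambda>_. 0"])
next
  case (step t x y)
  then obtain l c where "l \<in> I" "x = a l" "y = (\<Sum>j\<in>I. c j *\<^sub>R a j)"
    by auto
  moreover have "(\<Sum>j\<in>I. (if j = l then t else 0) *\<^sub>R a j) = t *\<^sub>R a l"
    using \<open>l \<in> I\<close> assms(1) by (simp add: if_distrib[of "\<lambda>s. s *\<^sub>R _"] cong: if_cong)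
  ultimately have "t *\<^sub>R x + y = (\<Sum>j\<in>I. (c j + (if j = l then t else 0)) *\<^sub>R a j)"
    by (simp add: scaleR_add_left sum.distrib)
  then show ?case by (rule exI[of _ "\<lambda>j. c j + (if j = l then t else 0)"])
qed

lemma independent_family_not_in_span_others:
  fixes a :: "nat \<Rightarrow> 'a::real_vector"
  assumes indep: "\<forall>c. (\<Sum>j<k. c j *\<^sub>R a j) = 0 \<longrightarrow> (\<forall>j<k. c j = 0)" and "l < k"
  shows "a l \<notin> span (a ` ({..<k} - {l}))"
proof
  assume "a l \<in> span (a ` ({..<k} - {l}))"
  then obtain c where c: "a l = (\<Sum>j\<in>{..<k} - {l}. c j *\<^sub>R a j)"
    using in_span_image_imp_sum by blast
  define c' where "c' = c(l := -1)"
  have "(\<Sum>j<k. c' j *\<^sub>R a j) = c' l *\<^sub>R a l + (\<Sum>j\<in>{..<k} - {l}. c' j *\<^sub>R a j)"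
    using \<open>l < k\<close> by (simp add: sum.remove)
  also have "(\<Sum>j\<in>{..<k} - {l}. c' j *\<^sub>R a j) = a l"
    unfolding c c'_def by (intro sum.cong) auto
  finally have "(\<Sum>j<k. c' j *\<^sub>R a j) = 0"
    unfolding c'_def by simp
  with indep \<open>l < k\<close> have "c' l = 0" by blast
  then show False
    unfolding c'_def by simp
qed

definition biorthogonal :: "nat \<Rightarrow> (nat \<Rightarrow> 'a::real_inner) \<Rightarrow> (nat \<Rightarrow> 'a) \<Rightarrow> bool" where
  "biorthogonal k b e \<longleftrightarrow> (\<forall>l<k. \<forall>j<k. b j \<bullet> e l = (if j = l then 1 else 0))"

lemma biorthogonal_family_exists:
  fixes a :: "nat \<Rightarrow> 'a::euclidean_space"
  assumes indep: "\<forall>c. (\<Sum>j<k. c j *\<^sub>R a j) = 0 \<longrightarrow> (\<forall>j<k. c j = 0)"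
  shows "\<exists>e. biorthogonal k a e"
proof -
  have "\<exists>v. \<forall>j<k. a j \<bullet> v = (if j = l then 1 else 0)" if "l < k" for l
  proof -
    define V where "V = span (a ` ({..<k} - {l}))"
    \<comment> \<open>the component of a l orthogonal to the other vectors, normalised\<close>
    obtain p r where "p \<in> V" and r_orth: "\<And>w. w \<in> V \<Longrightarrow> orthogonal r w" and "a l = p + r"
      unfolding V_def using orthogonal_subspace_decomp_exists by metis
    have "r \<noteq> 0"
      using \<open>p \<in> V\<close> \<open>a l = p + r\<close> independent_family_not_in_span_others[OF indep \<open>l < k\<close>]
      unfolding V_def by auto
    have "a j \<bullet> r = (if j = l then r \<bullet> r else 0)" if "j < k" for j
    proof (cases "j = l")
      case True
      have "p \<bullet> r = 0"
        using r_orth[OF \<open>p \<in> V\<close>] by (simp add: orthogonal_def inner_commute)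
      with True \<open>a l = p + r\<close> show ?thesis by (simp add: inner_add_left)
    next
      case False
      with \<open>j < k\<close> have "a j \<in> V"
        unfolding V_def by (intro span_base) auto
      with False show ?thesis
        using r_orth[of "a j"] by (simp add: orthogonal_def inner_commute)
    qed
    with \<open>r \<noteq> 0\<close> show ?thesis
      by (intro exI[of _ "(1 / (r \<bullet> r)) *\<^sub>R r"]) simp
  qed
  then show ?thesis
    unfolding biorthogonal_def by metis
qed

lemma inner_biorthogonal_sum:
  fixes b e :: "nat \<Rightarrow> 'a::real_inner"
  assumes "biorthogonal k b e" and "j < k"
  shows "b j \<bullet> (\<Sum>l<k. c l *\<^sub>R e l) = c j"
proof -
  have "b j \<bullet> (\<Sum>l<k. c l *\<^sub>R e l) = (\<Sum>l<k. c l * (b j \<bullet> e l))"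
    by (simp add: inner_sum_right)
  also have "\<dots> = (\<Sum>l<k. if l = j then c l else 0)"
    using assms unfolding biorthogonal_def by (intro sum.cong) auto
  also have "\<dots> = c j"
    using \<open>j < k\<close> by simp
  finally show ?thesis .
qed

lemma biorthogonal_expansion:
  fixes b e :: "nat \<Rightarrow> 'a::real_inner"
  assumes biorth: "biorthogonal k b e"
    and "d \<in> span (e ` {..<k})"
  shows "d = (\<Sum>l<k. (b l \<bullet> d) *\<^sub>R e l)"
proof -
  obtain c where c: "d = (\<Sum>l<k. c l *\<^sub>R e l)"
    using in_span_image_imp_sum[OF _ assms(2)] by blast
  then have "(\<Sum>l<k. (b l \<bullet> d) *\<^sub>R e l) = (\<Sum>l<k. c l *\<^sub>R e l)"
    using inner_biorthogonal_sum[OF biorth] by (intro sum.cong) auto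
  with c show ?thesis by simp
qed

lemma norm_sum_inner_scaleR_le:
  fixes u e :: "nat \<Rightarrow> 'a::real_inner"
  shows "norm (\<Sum>l<k. (u l \<bullet> d) *\<^sub>R e l) \<le> (\<Sum>l<k. norm (u l) * norm (e l)) * norm d"
proof -
  have "norm (\<Sum>l<k. (u l \<bullet> d) *\<^sub>R e l) \<le> (\<Sum>l<k. \<bar>u l \<bullet> d\<bar> * norm (e l))"
    by (rule order_trans[OF norm_sum]) simp
  also have "\<dots> \<le> (\<Sum>l<k. norm (u l) * norm d * norm (e l))"
    by (intro sum_mono mult_right_mono Cauchy_Schwarz_ineq2) simp
  also have "\<dots> = (\<Sum>l<k. norm (u l) * norm (e l)) * norm d"
    by (simp add: sum_distrib_left sum_distrib_right mult_ac)
  finally show ?thesis .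
qed

lemma perturbed_biorthogonal_system_solvable:
  fixes a b e :: "nat \<Rightarrow> 'a::euclidean_space" and r :: "nat \<Rightarrow> real"
  assumes biorth: "biorthogonal k b e"
    and small: "(\<Sum>l<k. norm (b l - a l) * norm (e l)) \<le> 1/2"
  shows "\<exists>s. (\<forall>j<k. a j \<bullet> s = r j) \<and> norm s \<le> 2 * (\<Sum>l<k. \<bar>r l\<bar> * norm (e l))"
proof -
  define S where "S = span (e ` {..<k})"
  define L where "L = (\<Sum>l<k. norm (b l - a l) * norm (e l))"
  define \<Phi> where "\<Phi> s = s + (\<Sum>l<k. (r l - a l \<bullet> s) *\<^sub>R e l)" for s
  \<comment> \<open>every d in S is its own expansion \<Sum>l<k. (b l \<bullet> d) e l, so \<Phi> contracts S by the factor L\<close>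
  have \<Phi>_diff: "\<Phi> x - \<Phi> y = (x - y) - (\<Sum>l<k. (a l \<bullet> (x - y)) *\<^sub>R e l)" for x y
    unfolding \<Phi>_def by (simp add: inner_diff_right scaleR_diff_left sum_subtractf)
  have contraction: "d - (\<Sum>l<k. (a l \<bullet> d) *\<^sub>R e l) = (\<Sum>l<k. ((b l - a l) \<bullet> d) *\<^sub>R e l)"
    if "d \<in> S" for d
  proof -
    have "(\<Sum>l<k. ((b l - a l) \<bullet> d) *\<^sub>R e l) = (\<Sum>l<k. (b l \<bullet> d) *\<^sub>R e l) - (\<Sum>l<k. (a l \<bullet> d) *\<^sub>R e l)"
      by (simp add: inner_diff_left scaleR_diff_left sum_subtractf)
    also have "(\<Sum>l<k. (b l \<bullet> d) *\<^sub>R e l) = d"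
      using biorthogonal_expansion[OF biorth] that unfolding S_def by simp
    finally show ?thesis by simp
  qed
  have \<Phi>_lipschitz: "norm (\<Phi> x - \<Phi> y) \<le> L * norm (x - y)" if "x \<in> S" "y \<in> S" for x y
  proof -
    have "x - y \<in> S"
      using that unfolding S_def by (rule span_diff)
    show ?thesis
      unfolding \<Phi>_diff contraction[OF \<open>x - y \<in> S\<close>] L_def by (rule norm_sum_inner_scaleR_le)
  qed
  have "\<Phi> ` S \<subseteq> S"
    unfolding \<Phi>_def S_def by (intro image_subsetI span_add span_sum span_scale) (auto intro: span_base)
  moreover have "complete S"
    unfolding S_def by (simp add: complete_eq_closed)
  moreover have "S \<noteq> {}"
    unfolding S_def using span_zero by blast
  moreover have "0 \<le> L" "L < 1"
    using small unfolding L_def by (auto intro: sum_nonneg)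
  ultimately obtain s where "s \<in> S" and fixed: "\<Phi> s = s"
    using Banach_fix[of S L \<Phi>] \<Phi>_lipschitz by (auto simp: dist_norm)
  have "a j \<bullet> s = r j" if "j < k" for j
  proof -
    have "(\<Sum>l<k. (r l - a l \<bullet> s) *\<^sub>R e l) = 0"
      using fixed unfolding \<Phi>_def by simp
    then have "b j \<bullet> (\<Sum>l<k. (r l - a l \<bullet> s) *\<^sub>R e l) = 0" by simp
    then show ?thesis
      using inner_biorthogonal_sum[OF biorth that] by simp
  qed
  moreover have "norm s \<le> 2 * (\<Sum>l<k. \<bar>r l\<bar> * norm (e l))"
  proof -
    have \<Phi>0: "norm (\<Phi> 0) \<le> (\<Sum>l<k. \<bar>r l\<bar> * norm (e l))"
      unfolding \<Phi>_def using norm_sum[of "\<lambda>l. r l *\<^sub>R e l" "{..<k}"] by simp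
    have "norm s \<le> norm (\<Phi> s - \<Phi> 0) + norm (\<Phi> 0)"
      using norm_triangle_ineq[of "\<Phi> s - \<Phi> 0" "\<Phi> 0"] fixed by simp
    also have "\<dots> \<le> L * norm s + (\<Sum>l<k. \<bar>r l\<bar> * norm (e l))"
      using \<Phi>_lipschitz[OF \<open>s \<in> S\<close> span_zero[of "e ` {..<k}", folded S_def]] \<Phi>0
      by simp
    also have "\<dots> \<le> 1/2 * norm s + (\<Sum>l<k. \<bar>r l\<bar> * norm (e l))"
      using small unfolding L_def by (intro add_right_mono mult_right_mono) auto
    finally show ?thesis by simp
  qed
  ultimately show ?thesis by blast
qed

lemma vanishing_solution_of_perturbed_system:
  fixes a :: "nat \<Rightarrow> 'b \<Rightarrow> 'a::euclidean_space" and r :: "nat \<Rightarrow> 'b \<Rightarrow> real"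
  assumes indep: "\<forall>c. (\<Sum>j<k. c j *\<^sub>R b j) = 0 \<longrightarrow> (\<forall>j<k. c j = 0)"
    and a_lim: "\<forall>j<k. (a j \<longlongrightarrow> b j) F" and r_lim: "\<forall>j<k. (r j \<longlongrightarrow> 0) F"
  shows "\<exists>s. eventually (\<lambda>x. \<forall>j<k. a j x \<bullet> s x = r j x) F \<and> (s \<longlongrightarrow> 0) F"
proof -
  obtain e where biorth: "biorthogonal k b e"
    using biorthogonal_family_exists[OF indep] by blast
  define B where "B x = 2 * (\<Sum>l<k. \<bar>r l x\<bar> * norm (e l))" for x
  define s where "s x = (SOME s. (\<forall>j<k. a j x \<bullet> s = r j x) \<and> norm s \<le> B x)" for x
  have "((\<lambda>x. \<Sum>l<k. norm (b l - a l x) * norm (e l)) \<longlongrightarrow> (\<Sum>l<k. norm (b l - b l) * norm (e l))) F"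
    using a_lim by (intro tendsto_intros) auto
  then have "eventually (\<lambda>x. (\<Sum>l<k. norm (b l - a l x) * norm (e l)) < 1/2) F"
    by (intro order_tendstoD(2)) auto
  then have "eventually (\<lambda>x. (\<Sum>l<k. norm (b l - a l x) * norm (e l)) \<le> 1/2) F"
    by (rule eventually_mono) simp
  then have s_sol: "eventually (\<lambda>x. (\<forall>j<k. a j x \<bullet> s x = r j x) \<and> norm (s x) \<le> B x) F"
    unfolding s_def B_def
    by (rule eventually_mono) (rule someI_ex, rule perturbed_biorthogonal_system_solvable[OF biorth])
  have "(B \<longlongrightarrow> 2 * (\<Sum>l<k. \<bar>0\<bar> * norm (e l))) F"
    unfolding B_def using r_lim by (intro tendsto_intros) auto
  then have "(s \<longlongrightarrow> 0) F"
    using s_sol by (intro Lim_null_comparison[of s B]) (auto elim: eventually_mono)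
  moreover have "eventually (\<lambda>x. \<forall>j<k. a j x \<bullet> s x = r j x) F"
    using s_sol by (rule eventually_mono) simp
  ultimately show ?thesis by blast
qed

section \<open>Farkas' lemma for mixed systems of linear constraints\<close>

definition constraint_polyhedron ::
  "nat \<Rightarrow> nat \<Rightarrow> (nat \<Rightarrow> 'a::real_inner) \<Rightarrow> (nat \<Rightarrow> real) \<Rightarrow> 'a set" where
  "constraint_polyhedron m N A c = {y. (\<forall>l<m. c l \<le> A l \<bullet> y) \<and> (\<forall>l\<in>{m..<N}. A l \<bullet> y = c l)}"

definition constraint_cone :: "nat \<Rightarrow> nat \<Rightarrow> (nat \<Rightarrow> 'a::real_vector) \<Rightarrow> 'a set" where
  "constraint_cone m N A = {\<Sum>i<N. w i *\<^sub>R A i | w. \<forall>l<m. 0 \<le> w l}"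

lemma constraint_polyhedron_eq_Inter:
  "constraint_polyhedron m N A c =
     (\<Inter>l<m. {y. A l \<bullet> y \<ge> c l}) \<inter> (\<Inter>l\<in>{m..<N}. {y. A l \<bullet> y = c l})"
  unfolding constraint_polyhedron_def by auto

lemma closed_constraint_polyhedron: "closed (constraint_polyhedron m N A c)"
  unfolding constraint_polyhedron_eq_Inter
  by (intro closed_Int closed_INT ballI closed_halfspace_ge closed_hyperplane)

lemma convex_constraint_polyhedron: "convex (constraint_polyhedron m N A c)"
  unfolding constraint_polyhedron_eq_Inter
  by (intro convex_Int convex_INT ballI convex_halfspace_ge convex_hyperplane)

lemma convex_cone_constraint_cone: "convex_cone (constraint_cone m N A)"
  unfolding convex_cone_iff
proof (intro conjI ballI allI impI)
  show "0 \<in> constraint_cone m N A"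
    unfolding constraint_cone_def by (auto intro!: exI[of _ "\<lambda>_. 0"])
next
  fix x y assume "x \<in> constraint_cone m N A" "y \<in> constraint_cone m N A"
  then obtain v w where "x = (\<Sum>i<N. v i *\<^sub>R A i)" "\<forall>l<m. 0 \<le> v l"
    and "y = (\<Sum>i<N. w i *\<^sub>R A i)" "\<forall>l<m. 0 \<le> w l"
    unfolding constraint_cone_def by auto
  then show "x + y \<in> constraint_cone m N A"
    unfolding constraint_cone_def
    by (intro CollectI exI[of _ "\<lambda>i. v i + w i"]) (auto simp: scaleR_add_left sum.distrib)
next
  fix x and t :: real assume "x \<in> constraint_cone m N A" "0 \<le> t"
  then obtain w where "x = (\<Sum>i<N. w i *\<^sub>R A i)" "\<forall>l<m. 0 \<le> w l"
    unfolding constraint_cone_def by auto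
  with \<open>0 \<le> t\<close> show "t *\<^sub>R x \<in> constraint_cone m N A"
    unfolding constraint_cone_def by (intro CollectI exI[of _ "\<lambda>i. t * w i"]) (auto simp: scaleR_sum_right)
qed

lemma scaled_generator_in_constraint_cone:
  assumes "l < N" and "l < m \<Longrightarrow> 0 \<le> s"
  shows "s *\<^sub>R A l \<in> constraint_cone m N A"
proof -
  have "(\<Sum>i<N. (if i = l then s else 0) *\<^sub>R A i) = (\<Sum>i<N. if i = l then s *\<^sub>R A i else 0)"
    by (intro sum.cong) auto
  also have "\<dots> = s *\<^sub>R A l"
    using assms(1) by simp
  finally show ?thesis
    unfolding constraint_cone_def using assms
    by (intro CollectI exI[of _ "\<lambda>i. if i = l then s else 0"]) auto
qed

lemma farkas_constraint_cone:
  fixes A :: "nat \<Rightarrow> 'a::euclidean_space"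
  assumes "m \<le> N" and "z \<notin> constraint_cone m N A"
  shows "\<exists>a. (\<forall>l<m. 0 \<le> a \<bullet> A l) \<and> (\<forall>l\<in>{m..<N}. a \<bullet> A l = 0) \<and> a \<bullet> z < 0"
proof -
  define S where "S = A ` {..<N} \<union> uminus ` A ` {m..<N}"
  have "S \<subseteq> constraint_cone m N A"
    using scaled_generator_in_constraint_cone[of _ N m "-1" A]
      scaled_generator_in_constraint_cone[of _ N m 1 A] \<open>m \<le> N\<close>
    unfolding S_def by auto
  then have "convex_cone hull S \<subseteq> constraint_cone m N A"
    by (simp add: convex_cone_constraint_cone hull_minimal)
  with assms(2) have "z \<notin> convex_cone hull S" by blast
  moreover have "finite S"
    unfolding S_def by simp
  ultimately obtain a b where az: "a \<bullet> z < b" and a_hull: "\<forall>x\<in>convex_cone hull S. b < a \<bullet> x"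
    using separating_hyperplane_closed_point[OF convex_convex_cone_hull closed_convex_cone_hull]
    by blast
  have "b < 0"
    using a_hull convex_cone_hull_contains_0 by fastforce
  \<comment> \<open>otherwise a positive multiple of s would be a point of the cone at level b\<close>
  have a_nonneg: "0 \<le> a \<bullet> s" if "s \<in> S" for s
  proof (rule ccontr)
    assume "\<not> 0 \<le> a \<bullet> s"
    then have "(b / (a \<bullet> s)) *\<^sub>R s \<in> convex_cone hull S"
      using \<open>b < 0\<close> that by (intro convex_cone_hull_mul hull_inc) (auto simp: divide_nonpos_neg)
    with a_hull \<open>\<not> 0 \<le> a \<bullet> s\<close> show False by fastforce
  qed
  have "\<forall>l<m. 0 \<le> a \<bullet> A l"
    using a_nonneg \<open>m \<le> N\<close> unfolding S_def by auto
  moreover have "\<forall>l\<in>{m..<N}. a \<bullet> A l = 0"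
  proof
    fix l assume "l \<in> {m..<N}"
    then have "A l \<in> S" "- A l \<in> S"
      unfolding S_def by auto
    then have "0 \<le> a \<bullet> A l" "0 \<le> a \<bullet> - A l"
      using a_nonneg by blast+
    then show "a \<bullet> A l = 0" by simp
  qed
  ultimately show ?thesis
    using az \<open>b < 0\<close> by auto
qed

lemma constraint_polyhedron_meets_translated_cone:
  fixes A :: "nat \<Rightarrow> 'a::euclidean_space"
  assumes "m \<le> N" and "constraint_polyhedron m N A c \<noteq> {}"
  shows "\<exists>w. (\<forall>l<m. 0 \<le> w l) \<and> q + (\<Sum>i<N. w i *\<^sub>R A i) \<in> constraint_polyhedron m N A c"
proof -
  define P where "P = constraint_polyhedron m N A c"
  define p where "p = closest_point P q"
  have "p \<in> P"
    unfolding p_def P_def using assms(2) by (simp add: closest_point_in_set closed_constraint_polyhedron)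
  have "p - q \<in> constraint_cone m N A"
  proof (rule ccontr)
    assume "p - q \<notin> constraint_cone m N A"
    then obtain a where a_ge: "\<forall>l<m. 0 \<le> a \<bullet> A l" and a_eq: "\<forall>l\<in>{m..<N}. a \<bullet> A l = 0"
      and "a \<bullet> (p - q) < 0"
      using farkas_constraint_cone[OF assms(1)] by blast
    have "p + a \<in> P"
      using \<open>p \<in> P\<close> a_ge a_eq unfolding P_def constraint_polyhedron_def
      by (auto simp: inner_add_right inner_commute intro: add_increasing2)
    then have "(q - p) \<bullet> ((p + a) - p) \<le> 0"
      unfolding p_def P_def
      by (intro closest_point_dot convex_constraint_polyhedron closed_constraint_polyhedron)
    with \<open>a \<bullet> (p - q) < 0\<close> show False
      by (simp add: inner_diff_left inner_diff_right inner_commute)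
  qed
  then obtain w where "p - q = (\<Sum>i<N. w i *\<^sub>R A i)" "\<forall>l<m. 0 \<le> w l"
    unfolding constraint_cone_def by auto
  with \<open>p \<in> P\<close> show ?thesis
    unfolding P_def by (metis add.commute diff_add_cancel)
qed

section \<open>Linearized feasibility and the barrier condition\<close>

lemma C1_fun_tendsto:
  assumes "C1_fun p"
  shows "(p \<longlongrightarrow> p x) (nhds x)"
proof -
  obtain D where "GDERIV p x :> D"
    using assms unfolding C1_fun_def by blast
  then have "isCont p x"
    unfolding gderiv_def by (rule has_derivative_continuous)
  then show ?thesis
    by (simp add: isCont_def tendsto_at_iff_tendsto_nhds)
qed

lemma C1_fun_tendsto_grad:
  assumes "C1_fun p"
  shows "(grad p \<longlongrightarrow> grad p x) (nhds x)"
proof -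
  have "isCont (grad p) x"
    using assms unfolding C1_fun_def by (simp add: continuous_on_eq_continuous_at)
  then show ?thesis
    by (simp add: isCont_def tendsto_at_iff_tendsto_nhds)
qed

lemma exists_step_strictly_negative:
  fixes a d :: "nat \<Rightarrow> real"
  assumes "\<forall>i<m. a i \<le> 0" and "\<forall>i<m. a i = 0 \<longrightarrow> d i < 0"
  shows "\<exists>t>0. \<forall>i<m. a i + t * d i < 0"
proof -
  have "eventually (\<lambda>t. a i + t * d i < 0) (at_right 0)" if "i < m" for i
  proof (cases "a i = 0")
    case True
    with assms(2) \<open>i < m\<close> have "d i < 0" by blast
    show ?thesis
      using eventually_at_right_less[of 0]
      by (rule eventually_mono) (simp add: True \<open>d i < 0\<close> mult_pos_neg)
  next
    case False
    with assms(1) \<open>i < m\<close> have "a i < 0" by force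
    moreover have "((\<lambda>t. a i + t * d i) \<longlongrightarrow> a i + 0 * d i) (at_right 0)"
      by (intro tendsto_intros)
    ultimately show ?thesis
      by (intro order_tendstoD(2)) auto
  qed
  then have "eventually (\<lambda>t. 0 < t \<and> (\<forall>i\<in>{..<m}. a i + t * d i < 0)) (at_right 0)"
    by (intro eventually_conj eventually_at_right_less eventually_ball_finite) auto
  then obtain t where "0 < t \<and> (\<forall>i\<in>{..<m}. a i + t * d i < 0)"
    using eventually_happens'[OF trivial_limit_at_right_real] by blast
  then show ?thesis by auto
qed

lemma MFCQ_imp_eventually_linearization_feasible:
  fixes g h :: "nat \<Rightarrow> real^'n \<Rightarrow> real"
  assumes g_C1: "\<forall>i<m. C1_fun (g i)" and h_C1: "\<forall>j<k. C1_fun (h j)"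
    and "x0 \<in> feasible_set m k g h" and "MFCQ m k g h x0"
  shows "eventually (\<lambda>x. \<exists>y. (\<forall>i<m. g i x \<le> grad (g i) x \<bullet> y) \<and> (\<forall>j<k. grad (h j) x \<bullet> y = h j x))
           (nhds x0)"
proof -
  obtain \<xi> where \<xi>_h: "\<forall>j<k. grad (h j) x0 \<bullet> \<xi> = 0"
    and \<xi>_g: "\<forall>i<m. g i x0 = 0 \<longrightarrow> grad (g i) x0 \<bullet> \<xi> < 0"
    and indep: "\<forall>c. (\<Sum>j<k. c j *\<^sub>R grad (h j) x0) = 0 \<longrightarrow> (\<forall>j<k. c j = 0)"
    using \<open>MFCQ m k g h x0\<close> unfolding MFCQ_def by blast
  have g_x0: "\<forall>i<m. g i x0 \<le> 0" and h_x0: "\<forall>j<k. h j x0 = 0"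
    using \<open>x0 \<in> feasible_set m k g h\<close> unfolding feasible_set_def by auto
  obtain t where "t > 0" and t_strict: "\<forall>i<m. g i x0 + t * (grad (g i) x0 \<bullet> \<xi>) < 0"
    using exists_step_strictly_negative[OF g_x0, of "\<lambda>i. grad (g i) x0 \<bullet> \<xi>"] \<xi>_g by blast
  \<comment> \<open>y = s x - t \<xi>, where the correction s x restores the equality constraints and tends to 0\<close>
  define r where "r j x = h j x + t * (grad (h j) x \<bullet> \<xi>)" for j x
  have "(r j \<longlongrightarrow> h j x0 + t * (grad (h j) x0 \<bullet> \<xi>)) (nhds x0)" if "j < k" for j
    unfolding r_def using h_C1 that by (intro tendsto_intros C1_fun_tendsto C1_fun_tendsto_grad) auto
  then have r_lim: "\<forall>j<k. (r j \<longlongrightarrow> 0) (nhds x0)"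
    using h_x0 \<xi>_h by simp
  have grad_h_lim: "\<forall>j<k. (grad (h j) \<longlongrightarrow> grad (h j) x0) (nhds x0)"
    using h_C1 C1_fun_tendsto_grad by blast
  obtain s where s_sol: "eventually (\<lambda>x. \<forall>j<k. grad (h j) x \<bullet> s x = r j x) (nhds x0)"
    and "(s \<longlongrightarrow> 0) (nhds x0)"
    using vanishing_solution_of_perturbed_system[OF indep grad_h_lim r_lim] by blast
  have "eventually (\<lambda>x. g i x + t * (grad (g i) x \<bullet> \<xi>) - grad (g i) x \<bullet> s x < 0) (nhds x0)"
    if "i < m" for i
  proof -
    have "((\<lambda>x. g i x + t * (grad (g i) x \<bullet> \<xi>) - grad (g i) x \<bullet> s x)
            \<longlongrightarrow> g i x0 + t * (grad (g i) x0 \<bullet> \<xi>) - grad (g i) x0 \<bullet> 0) (nhds x0)"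
      using g_C1 that \<open>(s \<longlongrightarrow> 0) (nhds x0)\<close>
      by (intro tendsto_intros C1_fun_tendsto C1_fun_tendsto_grad) auto
    with t_strict that show ?thesis
      by (intro order_tendstoD(2)) auto
  qed
  then have "eventually (\<lambda>x. \<forall>i\<in>{..<m}. g i x + t * (grad (g i) x \<bullet> \<xi>) - grad (g i) x \<bullet> s x < 0)
               (nhds x0)"
    by (intro eventually_ball_finite) auto
  with s_sol show ?thesis
  proof (eventually_elim)
    case (elim x)
    have "g i x \<le> grad (g i) x \<bullet> (s x - t *\<^sub>R \<xi>)" if "i < m" for i
      using bspec[OF elim(2), of i] that by (simp add: inner_diff_right)
    moreover have "grad (h j) x \<bullet> (s x - t *\<^sub>R \<xi>) = h j x" if "j < k" for j
      using elim(1) that by (simp add: r_def inner_diff_right)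
    ultimately show ?case by blast
  qed
qed

lemma vector_cbf_gradient_inputs:
  fixes \<phi> :: "nat \<Rightarrow> real^'n \<Rightarrow> real" and F0 :: "real^'n \<Rightarrow> real^'n"
  assumes "\<forall>i<m+k. C1_fun (\<phi> i)"
    and "C = {x. (\<forall>i<m. \<phi> i x \<le> 0) \<and> (\<forall>j\<in>{m..<m+k}. \<phi> j x = 0)}" and "C \<subseteq> X"
    and linearization_feasible:
      "\<forall>x\<in>X. constraint_polyhedron m (m+k) (\<lambda>l. grad (\<phi> l) x) (\<lambda>l. \<phi> l x) \<noteq> {}"
  shows "vector_cbf m k \<phi> C X (m+k) F0 (\<lambda>l x. - grad (\<phi> l) x) {w. \<forall>l<m. 0 \<le> w l}"
proof -
  have "\<exists>w\<in>{w. \<forall>l<m. 0 \<le> w l}.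
          (\<forall>i<m. grad (\<phi> i) x \<bullet> (F0 x + (\<Sum>l<m+k. w l *\<^sub>R - grad (\<phi> l) x)) + 1 * \<phi> i x \<le> 0) \<and>
          (\<forall>j\<in>{m..<m+k}. grad (\<phi> j) x \<bullet> (F0 x + (\<Sum>l<m+k. w l *\<^sub>R - grad (\<phi> l) x)) + 1 * \<phi> j x = 0)"
    if x_in: "x \<in> X" for x
  proof -
    \<comment> \<open>a point of the linearization of the form - F0 x + \<Sum> w l \<nabla>\<phi> l gives the input w\<close>
    obtain w where "\<forall>l<m. 0 \<le> w l"
      and "- F0 x + (\<Sum>l<m+k. w l *\<^sub>R grad (\<phi> l) x)
             \<in> constraint_polyhedron m (m+k) (\<lambda>l. grad (\<phi> l) x) (\<lambda>l. \<phi> l x)"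
      using constraint_polyhedron_meets_translated_cone[where q = "- F0 x", OF _ linearization_feasible[rule_format, OF x_in]]
      by auto
    moreover have "F0 x + (\<Sum>l<m+k. w l *\<^sub>R - grad (\<phi> l) x) = - (- F0 x + (\<Sum>l<m+k. w l *\<^sub>R grad (\<phi> l) x))"
      by (simp add: sum_negf)
    ultimately show ?thesis
      unfolding constraint_polyhedron_def by (intro bexI[of _ w]) (auto simp: inner_diff_right)
  qed
  with assms(1-3) show ?thesis
    unfolding vector_cbf_def by (intro conjI exI[of _ 1]) auto
qed

lemma eventually_nhds_imp_in_interior:
  assumes "eventually P (nhds x)"
  shows "x \<in> interior {x. P x}"
proof -
  obtain S where "open S" "x \<in> S" "\<forall>y\<in>S. P y"
    using assms unfolding eventually_nhds by blast
  then show ?thesis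
    by (intro interiorI[of S]) auto
qed

lemma ball_atLeastLessThan_add_iff:
  fixes m k :: nat
  shows "(\<forall>j\<in>{m..<m+k}. P j) \<longleftrightarrow> (\<forall>j<k. P (m + j))"
  by (auto, metis add_less_cancel_left le_add_diff_inverse)

theorem mainTheorem9:
  fixes f :: "real^'n \<Rightarrow> real"
    and g h :: "nat \<Rightarrow> real^'n \<Rightarrow> real"
    and m k :: nat
  assumes "C1_fun f"
    and "\<forall>i<m. C1_fun (g i)"
    and "\<forall>j<k. C1_fun (h j)"
    and "\<forall>x\<in>feasible_set m k g h. MFCQ m k g h x"
  shows "\<exists>X. open X \<and> feasible_set m k g h \<subseteq> X \<and>
           vector_cbf m k (\<lambda>i. if i < m then g i else h (i - m)) (feasible_set m k g h) X
             (m + k) (\<lambda>x. - grad f x)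
             (\<lambda>l x. if l < m then - grad (g l) x else - grad (h (l - m)) x)
             {w. \<forall>l<m. 0 \<le> w l}"
proof -
  define \<phi> where "\<phi> = (\<lambda>i. if i < m then g i else h (i - m))"
  define X where
    "X = interior {x. constraint_polyhedron m (m+k) (\<lambda>l. grad (\<phi> l) x) (\<lambda>l. \<phi> l x) \<noteq> {}}"
  have linearization_iff: "constraint_polyhedron m (m+k) (\<lambda>l. grad (\<phi> l) x) (\<lambda>l. \<phi> l x) \<noteq> {} \<longleftrightarrow>
      (\<exists>y. (\<forall>i<m. g i x \<le> grad (g i) x \<bullet> y) \<and> (\<forall>j<k. grad (h j) x \<bullet> y = h j x))" for x
    unfolding constraint_polyhedron_def \<phi>_def ball_atLeastLessThan_add_iff by simp
  have feasible_subset: "feasible_set m k g h \<subseteq> X"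
    unfolding X_def linearization_iff using assms(2-4)
    by (auto intro!: eventually_nhds_imp_in_interior MFCQ_imp_eventually_linearization_feasible)
  moreover have "X \<subseteq> {x. constraint_polyhedron m (m+k) (\<lambda>l. grad (\<phi> l) x) (\<lambda>l. \<phi> l x) \<noteq> {}}"
    unfolding X_def by (rule interior_subset)
  moreover have "\<forall>i<m+k. C1_fun (\<phi> i)"
    using assms(2,3) unfolding \<phi>_def by (auto simp: not_less)
  moreover have "feasible_set m k g h = {x. (\<forall>i<m. \<phi> i x \<le> 0) \<and> (\<forall>j\<in>{m..<m+k}. \<phi> j x = 0)}"
    unfolding feasible_set_def \<phi>_def ball_atLeastLessThan_add_iff by simp
  ultimately have "vector_cbf m k \<phi> (feasible_set m k g h) X (m + k) (\<lambda>x. - grad f x)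
      (\<lambda>l x. - grad (\<phi> l) x) {w. \<forall>l<m. 0 \<le> w l}"
    by (intro vector_cbf_gradient_inputs) auto
  moreover have "(\<lambda>l x. - grad (\<phi> l) x) = (\<lambda>l x. if l < m then - grad (g l) x else - grad (h (l - m)) x)"
    unfolding \<phi>_def by (intro ext) simp
  moreover have "open X"
    unfolding X_def by simp
  ultimately show ?thesis
    using feasible_subset unfolding \<phi>_def by (intro exI[of _ X]) simp
qed

end
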